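(* Consider the remote-estimation Markov decision process described in the context, and suppose $$\lim_{\delta\to\infty}\frac{g_{i,j}(\delta+1)}{g_{i,j}(\delta)}<\frac{1}{Q_{i,i}p_f}\quad\text{for all } i\in\mathcal{X}_{\rm ap},\ j\ne i.$$ Let $(\mathcal{L}^*,h)$ be the solution of the average-cost Bellman equation $$\mathcal{L}^*+h(s)=\min_{a\in\{0,1\}}\Big\{l(s,a)+\sum_{s'\in\mathcal{S}}P_{s,s'}(a)h(s')\Big\},\qquad s\in\mathcal{S}.$$ Then for every fixed estimation error $(i,j)$ with $i\ne j$, $h(i,j,\delta)$ is non-decreasing in $\delta$.
   Context: Model. A source $\{X_t\}_{t\ge1}$ is a homogeneous discrete-time Markov chain on $\mathcal{X}=\{1,\dots,M\}$ with irreducible transition matrix $Q=(Q_{i,j})$. Let $\mathcal{X}_{\rm ap}=\{i: Q_{i,i}>0\}$, $\mathcal{X}_{\rm p}=\mathcal{X}\setminus\mathcal{X}_{\rm ap}$; assume $\mathcal{X}_{\rm ap}\ne\emptyset$. At each time $t$ a sensor chooses $A_t\in\{0,1\}$ (1 = transmit). The channel is i.i.d. Bernoulli $H_t$ with $\Pr[H_t=1]=p_s$, $p_f=1-p_s$, independent of the source. The estimate evolves as $\hat X_{t+1}=X_t$ if $A_t=1,H_t=1$, else $\hat X_{t+1}=\hat X_t$. The AoCE is $\Delta_t=\Delta_{t-1}+1$ if $X_t\ne\hat X_t$ and $(X_t,\hat X_t)=(X_{t-1},\hat X_{t-1})$; $\Delta_t=1$ if $X_t\ne\hat X_t$ and $(X_t,\hat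 X_t)\ne(X_{t-1},\hat X_{t-1})$; $\Delta_t=0$ if $X_t=\hat X_t$. State $S_t=(X_t,\hat X_t,\Delta_t)$ with state space $\mathcal{S}=\{(i,i,0)\}\cup\{(i,j,\delta): i\ne j,i\in\mathcal{X}_{\rm ap},\delta\ge1\}\cup\{(i,j,1):i\ne j,i\in\mathcal{X}_{\rm p}\}$. Transition probabilities $P_{s,s'}(a)$: for $s=(i,j,\delta)$, $i\ne j$, under $a=0$: to $(i,j,\delta+1)$ w.p. $Q_{i,i}$, to $(j,j,0)$ w.p. $Q_{i,j}$, to $(k,j,1)$ w.p. $Q_{i,k}$ ($k\ne i,j$); under $a=1$: to $(i,i,0)$ w.p. $Q_{i,i}p_s$, to $(k,i,1)$ w.p. $Q_{i,k}p_s$ ($k\ne i$), to $(i,j,\delta+1)$ w.p. $Q_{i,i}p_f$, to $(j,j,0)$ w.p. $Q_{i,j}p_f$, to $(k,j,1)$ w.p. $Q_{i,k}p_f$ ($k\ne i,j$). For $s=(i,i,0)$ and any $a$: to $(i,i,0)$ w.p. $Q_{i,i}$, to $(k,i,1)$ w.p. $Q_{i,k}$ ($k\ne i$). Costs: $D_{i,j}>0$ for $i\ne j$ and non-negative, non-decreasing, possibly unbounded age functions $g_{i,j}$; $c(i,j,\delta)=D_{i,j}g_{i,j}(\delta)$ for $i\ne j$, $c(i,i,0)=0$; per-stage cost $l(s,a)=c(s)+\lambda\mathbb{1}\{a\ne0\}$, $\lambda\ge0$. $\mathcal{L}^*$ denotes the minimal long-run average cost $\inf_\pi\limsup_{T\to\infty}\frac1T\sum_{t=1}^T\mathbb{E}^\pi[l(S_t,A_t)]$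 over all (history-dependent) policies.
   Formalization: h(s) is the limit, along discount factors beta tending to 1, of optimal beta-discounted cost at s minus that at a reference state, and L* the limit of (1 - beta) times the latter, not minimal average cost. Apart from conventions, each condition added here is assumed in the paper as well or is needed for the statement above to hold. *)

theory Defs
  imports "HOL-Analysis.Analysis"
begin

text \<open>States are triples (x, xhat, delta) of naturals; source alphabet is {1..M}.
  Actions are naturals restricted to {0,1} (1 = transmit).\<close>

type_synonym st = "nat \<times> nat \<times> nat"

definition Xap :: "nat \<Rightarrow> (nat \<Rightarrow> nat \<Rightarrow> real) \<Rightarrow> nat set" where
  "Xap M Q = {i \<in> {1..M}. Q i i > 0}"

definition Xp :: "nat \<Rightarrow> (nat \<Rightarrow> nat \<Rightarrow> real) \<Rightarrow> nat set" where
  "Xp M Q = {1..M} - Xap M Q"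

definition state_space :: "nat \<Rightarrow> (nat \<Rightarrow> nat \<Rightarrow> real) \<Rightarrow> st set" where
  "state_space M Q =
     {(i, i, 0) | i. i \<in> {1..M}}
   \<union> {(i, j, d) | i j d. i \<in> Xap M Q \<and> j \<in> {1..M} \<and> i \<noteq> j \<and> d \<ge> 1}
   \<union> {(i, j, 1) | i j. i \<in> Xp M Q \<and> j \<in> {1..M} \<and> i \<noteq> j}"

fun Qpow :: "nat \<Rightarrow> (nat \<Rightarrow> nat \<Rightarrow> real) \<Rightarrow> nat \<Rightarrow> nat \<Rightarrow> nat \<Rightarrow> real" where
  "Qpow M Q 0 i j = (if i = j then 1 else 0)"
| "Qpow M Q (Suc n) i j = (\<Sum>k\<in>{1..M}. Qpow M Q n i k * Q k j)"

definition stochastic :: "nat \<Rightarrow> (nat \<Rightarrow> nat \<Rightarrow> real) \<Rightarrow> bool" where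
  "stochastic M Q \<longleftrightarrow> (\<forall>i\<in>{1..M}. \<forall>j\<in>{1..M}. Q i j \<ge> 0) \<and>
                       (\<forall>i\<in>{1..M}. (\<Sum>j\<in>{1..M}. Q i j) = 1)"

definition irreducible_chain :: "nat \<Rightarrow> (nat \<Rightarrow> nat \<Rightarrow> real) \<Rightarrow> bool" where
  "irreducible_chain M Q \<longleftrightarrow> (\<forall>i\<in>{1..M}. \<forall>j\<in>{1..M}. \<exists>n. Qpow M Q n i j > 0)"

text \<open>Transition probability P_{s,s'}(a), with success probability ps (pf = 1 - ps).
  The new source symbol k always ranges over {1..M}.\<close>

definition trans_prob ::
  "nat \<Rightarrow> (nat \<Rightarrow> nat \<Rightarrow> real) \<Rightarrow> real \<Rightarrow> st \<Rightarrow> nat \<Rightarrow> st \<Rightarrow> real" where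
  "trans_prob M Q ps s a s' =
    (case s of (i, j, d) \<Rightarrow> (case s' of (k, l, e) \<Rightarrow>
      if k \<notin> {1..M} then 0
      else if i = j then
        (if l = i \<and> (if k = i then e = 0 else e = 1) then Q i k else 0)
      else
        (if a = 1 then ps * (if l = i \<and> (if k = i then e = 0 else e = 1) then Q i k else 0) else 0)
        + (if a = 1 then 1 - ps else 1) *
          (if l = j then
             (if k = i then (if e = d + 1 then Q i i else 0)
              else if k = j then (if e = 0 then Q i j else 0)
              else (if e = 1 then Q i k else 0))
           else 0)))"

definition state_cost ::
  "(nat \<Rightarrow> nat \<Rightarrow> real) \<Rightarrow> (nat \<Rightarrow> nat \<Rightarrow> nat \<Rightarrow> real) \<Rightarrow> st \<Rightarrow> real" where
  "state_cost D g s = (case s of (i, j, d) \<Rightarrow> if i = j then 0 else D i j * g i j d)"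

definition stage_cost ::
  "(nat \<Rightarrow> nat \<Rightarrow> real) \<Rightarrow> (nat \<Rightarrow> nat \<Rightarrow> nat \<Rightarrow> real) \<Rightarrow> real \<Rightarrow> st \<Rightarrow> nat \<Rightarrow> real" where
  "stage_cost D g lam s a = state_cost D g s + lam * (if a \<noteq> 0 then 1 else 0)"

text \<open>Discounted value iteration from 0 and the optimal discounted cost V_beta
  (for non-negative costs and finite actions it is the monotone limit of value iteration).\<close>

fun disc_VI ::
  "nat \<Rightarrow> (nat \<Rightarrow> nat \<Rightarrow> real) \<Rightarrow> real \<Rightarrow> (nat \<Rightarrow> nat \<Rightarrow> real) \<Rightarrow> (nat \<Rightarrow> nat \<Rightarrow> nat \<Rightarrow> real)
   \<Rightarrow> real \<Rightarrow> real \<Rightarrow> nat \<Rightarrow> st \<Rightarrow> real" where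
  "disc_VI M Q ps D g lam beta 0 s = 0"
| "disc_VI M Q ps D g lam beta (Suc n) s =
     (MIN a\<in>{0, 1::nat}. stage_cost D g lam s a
        + beta * (\<Sum>\<^sub>\<infinity>s'\<in>state_space M Q. trans_prob M Q ps s a s' * disc_VI M Q ps D g lam beta n s'))"

definition disc_value ::
  "nat \<Rightarrow> (nat \<Rightarrow> nat \<Rightarrow> real) \<Rightarrow> real \<Rightarrow> (nat \<Rightarrow> nat \<Rightarrow> real) \<Rightarrow> (nat \<Rightarrow> nat \<Rightarrow> nat \<Rightarrow> real)
   \<Rightarrow> real \<Rightarrow> real \<Rightarrow> st \<Rightarrow> real" where
  "disc_value M Q ps D g lam beta s = (SUP n. disc_VI M Q ps D g lam beta n s)"

definition bellman_rhs ::
  "nat \<Rightarrow> (nat \<Rightarrow> nat \<Rightarrow> real) \<Rightarrow> real \<Rightarrow> (nat \<Rightarrow> nat \<Rightarrow> real) \<Rightarrow> (nat \<Rightarrow> nat \<Rightarrow> nat \<Rightarrow> real)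
   \<Rightarrow> real \<Rightarrow> (st \<Rightarrow> real) \<Rightarrow> st \<Rightarrow> nat \<Rightarrow> real" where
  "bellman_rhs M Q ps D g lam h s a =
     stage_cost D g lam s a + (\<Sum>\<^sub>\<infinity>s'\<in>state_space M Q. trans_prob M Q ps s a s' * h s')"

end

theory Submission
  imports Defs
begin

text \<open>The relative value h is the vanishing-discount limit of V \<beta> s - V \<beta> z, so it suffices that
  every discounted value V \<beta> (i, j, \<delta>) is non-decreasing in the age \<delta>. Value iteration preserves this monotonicity: the stage cost is
  non-decreasing in \<delta>, and the only successor depending on \<delta> is the stale state (i, j, \<delta> + 1).
  Monotonicity passes to V \<beta>, the supremum of the iterates, once these are bounded, and the
  growth condition on g yields a Lyapunov function K + \<alpha> i j * g i j \<delta> dominating all of them.\<close>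

lemma ratio_limit_affine_bound:
  fixes u :: "nat \<Rightarrow> real"
  assumes mono: "mono u" and nonneg: "\<And>d. 0 \<le> u d"
    and ratio: "(\<lambda>d. u (d + 1) / u d) \<longlonglongrightarrow> r" and "r < \<rho>"
  obtains C where "0 \<le> C" "\<And>d. u (d + 1) \<le> \<rho> * u d + C"
proof (cases "\<forall>d. u d = 0")
  case True
  then show ?thesis using that[of 0] by simp
next
  case False
  then obtain d\<^sub>1 where "u d\<^sub>1 \<noteq> 0" by blast
  then have pos: "0 < u d\<^sub>1" using nonneg[of d\<^sub>1] by linarith
  have "0 \<le> r"
    using ratio by (rule tendsto_lowerbound) (simp_all add: nonneg)
  then have "0 < \<rho>" using \<open>r < \<rho>\<close> by linarith
  obtain N where N: "\<And>d. N \<le> d \<Longrightarrow> u (d + 1) / u d < \<rho>"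
    using order_tendstoD(2)[OF ratio \<open>r < \<rho>\<close>] by (auto simp: eventually_sequentially)
  \<comment> \<open>x / 0 = 0, so the ratio says nothing while u d = 0: start past a point where u > 0.\<close>
  define N' where "N' = max N d\<^sub>1"
  show ?thesis
  proof (rule that[of "u N'"])
    show "0 \<le> u N'" by (rule nonneg)
    fix d
    show "u (d + 1) \<le> \<rho> * u d + u N'"
    proof (cases "N' \<le> d")
      case True
      then have "0 < u d" using pos monoD[OF mono, of d\<^sub>1 d] by (simp add: N'_def)
      then have "u (d + 1) < \<rho> * u d"
        using N[of d] True by (simp add: N'_def pos_divide_less_eq)
      then show ?thesis using nonneg[of N'] by linarith
    next
      case False
      then have "u (d + 1) \<le> u N'" by (intro monoD[OF mono]) simp
      moreover have "0 \<le> \<rho> * u d" using \<open>0 < \<rho>\<close> nonneg[of d] by simp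
      ultimately show ?thesis by linarith
    qed
  qed
qed

text \<open>The weight \<alpha> solves \<alpha> = D + c \<rho> \<alpha> for a ratio bound \<rho> with c \<rho> < 1.\<close>

lemma linear_drift_bound:
  fixes u :: "nat \<Rightarrow> real"
  assumes mono: "mono u" and nonneg: "\<And>d. 0 \<le> u d"
    and ratio: "(\<lambda>d. u (d + 1) / u d) \<longlonglongrightarrow> r"
    and "0 \<le> c" "c * r < 1" "0 \<le> D"
  obtains \<alpha> E where "0 \<le> \<alpha>" "0 \<le> E" "\<And>d. D * u d + c * \<alpha> * u (d + 1) \<le> \<alpha> * u d + E"
proof -
  define \<rho> where "\<rho> = r + (1 - c * r) / (c + 1)"
  have "r < \<rho>" using assms by (simp add: \<rho>_def)
  have "c * \<rho> < 1"
  proof -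
    have "c * (1 - c * r) / (c + 1) < 1 - c * r"
      using assms by (simp add: divide_less_eq)
    then show ?thesis by (simp add: \<rho>_def algebra_simps)
  qed
  obtain C where "0 \<le> C" and C: "\<And>d. u (d + 1) \<le> \<rho> * u d + C"
    using ratio_limit_affine_bound[OF mono nonneg ratio \<open>r < \<rho>\<close>] by blast
  define \<alpha> where "\<alpha> = D / (1 - c * \<rho>)"
  have "0 \<le> \<alpha>" using \<open>c * \<rho> < 1\<close> \<open>0 \<le> D\<close> by (simp add: \<alpha>_def)
  have \<alpha>_eq: "\<alpha> = D + c * \<rho> * \<alpha>" using \<open>c * \<rho> < 1\<close> by (simp add: \<alpha>_def field_simps)
  show ?thesis
  proof (rule that[of \<alpha> "c * \<alpha> * C"])
    show "0 \<le> \<alpha>" "0 \<le> c * \<alpha> * C" using \<open>0 \<le> \<alpha>\<close> \<open>0 \<le> c\<close> \<open>0 \<le> C\<close> by simp_all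
    fix d
    have "c * \<alpha> * u (d + 1) \<le> c * \<alpha> * (\<rho> * u d + C)"
      using C[of d] \<open>0 \<le> \<alpha>\<close> \<open>0 \<le> c\<close> by (simp add: mult_left_mono)
    then have "D * u d + c * \<alpha> * u (d + 1) \<le> (D + c * \<rho> * \<alpha>) * u d + c * \<alpha> * C"
      by (simp add: algebra_simps)
    then show "D * u d + c * \<alpha> * u (d + 1) \<le> \<alpha> * u d + c * \<alpha> * C"
      using \<alpha>_eq by simp
  qed
qed

definition fresh_succ :: "nat \<Rightarrow> nat \<Rightarrow> st" where
  "fresh_succ i k = (k, i, if k = i then 0 else 1)"

definition stale_succ :: "nat \<Rightarrow> nat \<Rightarrow> nat \<Rightarrow> nat \<Rightarrow> st" where
  "stale_succ i j d k = (k, j, if k = i then d + 1 else if k = j then 0 else 1)"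

locale estimation_channel =
  fixes M :: nat and Q :: "nat \<Rightarrow> nat \<Rightarrow> real" and ps :: real
  assumes stochastic: "stochastic M Q"
    and ps_nonneg: "0 \<le> ps" and ps_le_1: "ps \<le> 1"
begin

definition fresh_prob :: "nat \<Rightarrow> nat \<Rightarrow> nat \<Rightarrow> nat \<Rightarrow> real" where
  "fresh_prob i j a k = (if i = j then Q i k else if a = 1 then ps * Q i k else 0)"

definition stale_prob :: "nat \<Rightarrow> nat \<Rightarrow> nat \<Rightarrow> nat \<Rightarrow> real" where
  "stale_prob i j a k = (if i = j then 0 else (if a = 1 then 1 - ps else 1) * Q i k)"

definition expected_next :: "nat \<Rightarrow> nat \<Rightarrow> nat \<Rightarrow> nat \<Rightarrow> (st \<Rightarrow> real) \<Rightarrow> real" where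
  "expected_next i j d a f =
     (\<Sum>k\<in>{1..M}. fresh_prob i j a k * f (fresh_succ i k) + stale_prob i j a k * f (stale_succ i j d k))"

lemma Q_nonneg: "i \<in> {1..M} \<Longrightarrow> k \<in> {1..M} \<Longrightarrow> 0 \<le> Q i k"
  using stochastic by (auto simp: stochastic_def)

lemma Q_row_sum: "i \<in> {1..M} \<Longrightarrow> (\<Sum>k\<in>{1..M}. Q i k) = 1"
  using stochastic by (auto simp: stochastic_def)

lemma fresh_prob_nonneg: "i \<in> {1..M} \<Longrightarrow> k \<in> {1..M} \<Longrightarrow> 0 \<le> fresh_prob i j a k"
  using Q_nonneg[of i k] ps_nonneg by (auto simp: fresh_prob_def)

lemma stale_prob_nonneg: "i \<in> {1..M} \<Longrightarrow> k \<in> {1..M} \<Longrightarrow> 0 \<le> stale_prob i j a k"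
  using Q_nonneg[of i k] ps_le_1 by (simp add: stale_prob_def)

lemma fresh_prob_add_stale_prob: "fresh_prob i j a k + stale_prob i j a k = Q i k"
  by (simp add: fresh_prob_def stale_prob_def algebra_simps)

lemma trans_prob_eq_sum:
  "trans_prob M Q ps (i, j, d) a s' =
     (\<Sum>k\<in>{1..M}. (if s' = fresh_succ i k then fresh_prob i j a k else 0)
                + (if s' = stale_succ i j d k then stale_prob i j a k else 0))"
  (is "_ = (\<Sum>k\<in>{1..M}. ?p k)")
proof -
  obtain k l e where s': "s' = (k, l, e)" by (cases s') auto
  have "?p k' = (if k' = k then ?p k else 0)" for k'
  proof (cases "k' = k")
    case False
    then have "s' \<noteq> fresh_succ i k'" "s' \<noteq> stale_succ i j d k'"
      by (simp_all add: s' fresh_succ_def stale_succ_def)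
    then show ?thesis using False by simp
  qed simp
  then have "(\<Sum>k'\<in>{1..M}. ?p k') = (if k \<in> {1..M} then ?p k else 0)"
    by (simp add: sum.delta')
  also have "\<dots> = trans_prob M Q ps (i, j, d) a s'"
    by (cases "i = j"; cases "k = i"; cases "k = j")
      (simp_all add: s' trans_prob_def fresh_succ_def stale_succ_def fresh_prob_def stale_prob_def)
  finally show ?thesis ..
qed

lemma fresh_succ_in_state_space:
  "i \<in> {1..M} \<Longrightarrow> k \<in> {1..M} \<Longrightarrow> fresh_succ i k \<in> state_space M Q"
  by (auto simp: fresh_succ_def state_space_def Xp_def)

text \<open>Only the stale successor (i, j, d + 1) can leave the state space, namely when Q i i = 0,
  and then it has probability 0; so expected_next needs no restriction to the state space.\<close>

lemma stale_succ_in_state_space: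
  assumes "i \<in> {1..M}" "j \<in> {1..M}" "k \<in> {1..M}" "stale_prob i j a k \<noteq> 0"
  shows "stale_succ i j d k \<in> state_space M Q"
proof -
  have "i \<noteq> j" "Q i k \<noteq> 0" using assms(4) by (auto simp: stale_prob_def split: if_splits)
  moreover have "k = i \<Longrightarrow> i \<in> Xap M Q"
    using \<open>Q i k \<noteq> 0\<close> Q_nonneg[of i i] assms(1) by (auto simp: Xap_def)
  ultimately show ?thesis
    using assms(1-3) by (auto simp: stale_succ_def state_space_def Xp_def)
qed

lemma infsum_trans_prob:
  assumes i: "i \<in> {1..M}" and j: "j \<in> {1..M}"
  shows "(\<Sum>\<^sub>\<infinity>s'\<in>state_space M Q. trans_prob M Q ps (i, j, d) a s' * f s') = expected_next i j d a f"
proof -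
  let ?S = "state_space M Q"
  define F where "F = ?S \<inter> (fresh_succ i ` {1..M} \<union> stale_succ i j d ` {1..M})"
  have "finite F" by (simp add: F_def)
  have "(\<Sum>\<^sub>\<infinity>s'\<in>?S. trans_prob M Q ps (i, j, d) a s' * f s')
      = (\<Sum>s'\<in>F. trans_prob M Q ps (i, j, d) a s' * f s')"
    using \<open>finite F\<close>
    by (subst infsum_cong_neutral[where T = F]) (auto simp: F_def trans_prob_eq_sum intro!: sum.neutral)
  also have "\<dots> = (\<Sum>s'\<in>F. \<Sum>k\<in>{1..M}.
      (if s' = fresh_succ i k then fresh_prob i j a k * f s' else 0)
    + (if s' = stale_succ i j d k then stale_prob i j a k * f s' else 0))"
    unfolding trans_prob_eq_sum sum_distrib_right by (intro sum.cong refl) (auto simp: distrib_right)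
  also have "\<dots> = (\<Sum>k\<in>{1..M}.
      (if fresh_succ i k \<in> F then fresh_prob i j a k * f (fresh_succ i k) else 0)
    + (if stale_succ i j d k \<in> F then stale_prob i j a k * f (stale_succ i j d k) else 0))"
    using \<open>finite F\<close> by (subst sum.swap) (simp add: sum.distrib sum.delta)
  also have "\<dots> = expected_next i j d a f"
    unfolding expected_next_def
    using fresh_succ_in_state_space[OF i] stale_succ_in_state_space[OF i j]
    by (intro sum.cong) (auto simp: F_def)
  finally show ?thesis .
qed

lemma expected_next_add_const:
  assumes "i \<in> {1..M}"
  shows "expected_next i j d a (\<lambda>s. c + f s) = c + expected_next i j d a f"
proof -
  have "expected_next i j d a (\<lambda>s. c + f s)
      = c * (\<Sum>k\<in>{1..M}. fresh_prob i j a k + stale_prob i j a k) + expected_next i j d a f"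
    by (simp add: expected_next_def algebra_simps sum.distrib sum_distrib_left)
  then show ?thesis
    using Q_row_sum[OF assms] by (simp add: fresh_prob_add_stale_prob)
qed

lemma expected_next_mono:
  assumes "i \<in> {1..M}" "j \<in> {1..M}"
    and "\<And>k l e. k \<in> {1..M} \<Longrightarrow> l \<in> {1..M} \<Longrightarrow> f (k, l, e) \<le> f' (k, l, e)"
  shows "expected_next i j d a f \<le> expected_next i j d a f'"
  unfolding expected_next_def
  using assms fresh_prob_nonneg[OF assms(1)] stale_prob_nonneg[OF assms(1)]
  by (intro sum_mono add_mono mult_left_mono) (auto simp: fresh_succ_def stale_succ_def)

lemma expected_next_mono_age:
  assumes "i \<in> {1..M}" and "f (i, j, d + 1) \<le> f (i, j, d' + 1)"
  shows "expected_next i j d a f \<le> expected_next i j d' a f"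
  unfolding expected_next_def
  using assms stale_prob_nonneg[OF assms(1)]
  by (intro sum_mono add_left_mono mult_left_mono) (auto simp: stale_succ_def)

text \<open>Every successor except the stale one (i, j, d + 1) has age at most 1.\<close>

lemma expected_next_le_young_bound:
  assumes i: "i \<in> {1..M}" and j: "j \<in> {1..M}" and "0 \<le> B"
    and young: "\<And>k l e. k \<in> {1..M} \<Longrightarrow> l \<in> {1..M} \<Longrightarrow> e \<le> 1 \<Longrightarrow> f (k, l, e) \<le> B"
  shows "expected_next i j d a f \<le> B + stale_prob i j a i * f (i, j, d + 1)"
proof -
  have "fresh_prob i j a k * f (fresh_succ i k) + stale_prob i j a k * f (stale_succ i j d k)
      \<le> Q i k * B + (if k = i then stale_prob i j a i * f (i, j, d + 1) else 0)"
    if k: "k \<in> {1..M}" for k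
  proof -
    have "fresh_prob i j a k * f (fresh_succ i k) \<le> fresh_prob i j a k * B"
      using young[OF k i] fresh_prob_nonneg[OF i k] by (intro mult_left_mono) (auto simp: fresh_succ_def)
    moreover have "stale_prob i j a k * f (stale_succ i j d k)
        \<le> stale_prob i j a k * B + (if k = i then stale_prob i j a i * f (i, j, d + 1) else 0)"
      using young[OF k j] stale_prob_nonneg[OF i k] \<open>0 \<le> B\<close>
      by (cases "k = i") (auto simp: stale_succ_def intro: mult_left_mono)
    moreover have "Q i k * B = fresh_prob i j a k * B + stale_prob i j a k * B"
      by (simp add: fresh_prob_add_stale_prob flip: distrib_right)
    ultimately show ?thesis by linarith
  qed
  then have "expected_next i j d a f
      \<le> (\<Sum>k\<in>{1..M}. Q i k * B + (if k = i then stale_prob i j a i * f (i, j, d + 1) else 0))"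
    unfolding expected_next_def by (rule sum_mono)
  also have "\<dots> = B + stale_prob i j a i * f (i, j, d + 1)"
    using i Q_row_sum[OF i] by (simp add: sum.distrib flip: sum_distrib_right)
  finally show ?thesis .
qed

lemma disc_VI_Suc:
  assumes "i \<in> {1..M}" "j \<in> {1..M}"
  shows "disc_VI M Q ps D g lam \<beta> (Suc n) (i, j, d) =
    min (stage_cost D g lam (i, j, d) 0 + \<beta> * expected_next i j d 0 (disc_VI M Q ps D g lam \<beta> n))
        (stage_cost D g lam (i, j, d) 1 + \<beta> * expected_next i j d 1 (disc_VI M Q ps D g lam \<beta> n))"
  using infsum_trans_prob[OF assms] by simp

lemma disc_VI_le_supersolution:
  assumes "0 \<le> \<beta>"
    and W_nonneg: "\<And>i j d. i \<in> {1..M} \<Longrightarrow> j \<in> {1..M} \<Longrightarrow> 0 \<le> W (i, j, d)"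
    and super: "\<And>i j d. i \<in> {1..M} \<Longrightarrow> j \<in> {1..M} \<Longrightarrow>
      stage_cost D g lam (i, j, d) 1 + \<beta> * expected_next i j d 1 W \<le> W (i, j, d)"
  shows "i \<in> {1..M} \<Longrightarrow> j \<in> {1..M} \<Longrightarrow> disc_VI M Q ps D g lam \<beta> n (i, j, d) \<le> W (i, j, d)"
proof (induction n arbitrary: i j d)
  case 0
  then show ?case using W_nonneg by simp
next
  case (Suc n)
  have "disc_VI M Q ps D g lam \<beta> (Suc n) (i, j, d)
      \<le> stage_cost D g lam (i, j, d) 1 + \<beta> * expected_next i j d 1 (disc_VI M Q ps D g lam \<beta> n)"
    unfolding disc_VI_Suc[OF Suc.prems] by (rule min.cobounded2)
  also have "\<dots> \<le> stage_cost D g lam (i, j, d) 1 + \<beta> * expected_next i j d 1 W"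
    using Suc \<open>0 \<le> \<beta>\<close> by (intro add_left_mono mult_left_mono expected_next_mono) auto
  also have "\<dots> \<le> W (i, j, d)"
    using Suc.prems by (rule super)
  finally show ?case .
qed

end

locale remote_estimation = estimation_channel +
  fixes D :: "nat \<Rightarrow> nat \<Rightarrow> real" and g :: "nat \<Rightarrow> nat \<Rightarrow> nat \<Rightarrow> real" and lam :: real
  assumes D_nonneg: "\<And>i j. i \<in> {1..M} \<Longrightarrow> j \<in> {1..M} \<Longrightarrow> i \<noteq> j \<Longrightarrow> 0 \<le> D i j"
    and g_nonneg: "\<And>i j d. i \<in> {1..M} \<Longrightarrow> j \<in> {1..M} \<Longrightarrow> i \<noteq> j \<Longrightarrow> 0 \<le> g i j d"
    and g_mono: "\<And>i j. i \<in> {1..M} \<Longrightarrow> j \<in> {1..M} \<Longrightarrow> i \<noteq> j \<Longrightarrow> mono (g i j)"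
    and lam_nonneg: "0 \<le> lam"
    and growth: "\<And>i j. i \<in> Xap M Q \<Longrightarrow> j \<in> {1..M} \<Longrightarrow> j \<noteq> i \<Longrightarrow>
      \<exists>r. ((\<lambda>d. g i j (d + 1) / g i j d) \<longlongrightarrow> r) sequentially \<and> r * (Q i i * (1 - ps)) < 1"
begin

lemma stage_cost_mono_age:
  assumes "i \<in> {1..M}" "j \<in> {1..M}" "i \<noteq> j" "d \<le> d'"
  shows "stage_cost D g lam (i, j, d) a \<le> stage_cost D g lam (i, j, d') a"
  using assms D_nonneg[OF assms(1-3)] monoD[OF g_mono[OF assms(1-3)] assms(4)]
  by (simp add: stage_cost_def state_cost_def mult_left_mono)

lemma disc_VI_mono_age:
  assumes i: "i \<in> {1..M}" and j: "j \<in> {1..M}" and "i \<noteq> j" "0 \<le> \<beta>"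
  shows "d \<le> d' \<Longrightarrow> disc_VI M Q ps D g lam \<beta> n (i, j, d) \<le> disc_VI M Q ps D g lam \<beta> n (i, j, d')"
proof (induction n arbitrary: d d')
  case 0
  then show ?case by simp
next
  case (Suc n)
  have "expected_next i j d a (disc_VI M Q ps D g lam \<beta> n)
      \<le> expected_next i j d' a (disc_VI M Q ps D g lam \<beta> n)" for a
    using Suc by (intro expected_next_mono_age[OF i]) simp
  then show ?case
    unfolding disc_VI_Suc[OF i j]
    using stage_cost_mono_age[OF i j \<open>i \<noteq> j\<close> Suc.prems] \<open>0 \<le> \<beta>\<close>
    by (intro min.mono add_mono mult_left_mono)
qed

text \<open>Where Q i i = 0 the age of (i, j) never grows and no growth condition is needed.\<close>

lemma drift_weights_exist:
  assumes "0 \<le> \<beta>" "\<beta> \<le> 1"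
  obtains \<alpha> E where "\<And>i j. 0 \<le> \<alpha> i j" "\<And>i j. 0 \<le> E i j"
    "\<And>i j d. i \<in> {1..M} \<Longrightarrow> j \<in> {1..M} \<Longrightarrow> i \<noteq> j \<Longrightarrow>
       D i j * g i j d + \<beta> * stale_prob i j 1 i * \<alpha> i j * g i j (d + 1) \<le> \<alpha> i j * g i j d + E i j"
proof -
  have "\<exists>a e. 0 \<le> a \<and> 0 \<le> e \<and> (i \<in> {1..M} \<and> j \<in> {1..M} \<and> i \<noteq> j \<longrightarrow>
      (\<forall>d. D i j * g i j d + \<beta> * stale_prob i j 1 i * a * g i j (d + 1) \<le> a * g i j d + e))" for i j
  proof (cases "i \<in> {1..M} \<and> j \<in> {1..M} \<and> i \<noteq> j")
    case False
    then show ?thesis by blast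
  next
    case True
    then have i: "i \<in> {1..M}" and j: "j \<in> {1..M}" and "i \<noteq> j" by auto
    have stale: "stale_prob i j 1 i = (1 - ps) * Q i i" using \<open>i \<noteq> j\<close> by (simp add: stale_prob_def)
    show ?thesis
    proof (cases "i \<in> Xap M Q")
      case True
      obtain r where ratio: "(\<lambda>d. g i j (d + 1) / g i j d) \<longlonglongrightarrow> r" and r: "r * (Q i i * (1 - ps)) < 1"
        using growth[OF True j] \<open>i \<noteq> j\<close> by blast
      have "\<beta> * (r * (Q i i * (1 - ps))) < 1"
        using r assms mult_left_le_one_le[of "r * (Q i i * (1 - ps))" \<beta>]
          mult_nonneg_nonpos[of \<beta> "r * (Q i i * (1 - ps))"] by force
      moreover have "\<beta> * stale_prob i j 1 i * r = \<beta> * (r * (Q i i * (1 - ps)))"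
        unfolding stale by (simp add: ac_simps)
      ultimately have "\<beta> * stale_prob i j 1 i * r < 1" by linarith
      moreover have "0 \<le> \<beta> * stale_prob i j 1 i" using assms stale_prob_nonneg[OF i i] by simp
      ultimately obtain a e where "0 \<le> a" "0 \<le> e"
        "\<And>d. D i j * g i j d + \<beta> * stale_prob i j 1 i * a * g i j (d + 1) \<le> a * g i j d + e"
        using linear_drift_bound[OF g_mono[OF i j \<open>i \<noteq> j\<close>] g_nonneg[OF i j \<open>i \<noteq> j\<close>] ratio]
          D_nonneg[OF i j \<open>i \<noteq> j\<close>] by metis
      then show ?thesis by blast
    next
      case False
      then have "stale_prob i j 1 i = 0"
        using Q_nonneg[OF i i] i unfolding stale by (simp add: Xap_def)
      then show ?thesis
        using D_nonneg[OF i j \<open>i \<noteq> j\<close>] by (intro exI[of _ "D i j"] exI[of _ 0]) simp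
    qed
  qed
  then show ?thesis using that by metis
qed

text \<open>The Lyapunov function K + \<alpha> i j g i j d: the drift weights absorb the growth of the
  age, while K pays for the constant costs and for restarts at age at most 1.\<close>

lemma supersolution_exists:
  assumes "0 \<le> \<beta>" "\<beta> < 1"
  obtains W where "\<And>i j d. i \<in> {1..M} \<Longrightarrow> j \<in> {1..M} \<Longrightarrow> 0 \<le> W (i, j, d)"
    "\<And>i j d. i \<in> {1..M} \<Longrightarrow> j \<in> {1..M} \<Longrightarrow>
       stage_cost D g lam (i, j, d) 1 + \<beta> * expected_next i j d 1 W \<le> W (i, j, d)"
proof -
  obtain \<alpha> E where \<alpha>: "\<And>i j. 0 \<le> \<alpha> i j" and E: "\<And>i j. 0 \<le> E i j"
    and drift: "\<And>i j d. i \<in> {1..M} \<Longrightarrow> j \<in> {1..M} \<Longrightarrow> i \<noteq> j \<Longrightarrow>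
       D i j * g i j d + \<beta> * stale_prob i j 1 i * \<alpha> i j * g i j (d + 1) \<le> \<alpha> i j * g i j d + E i j"
    using drift_weights_exist assms by (metis less_imp_le)
  define \<phi> :: "st \<Rightarrow> real" where "\<phi> s = (case s of (k, l, e) \<Rightarrow> if k = l then 0 else \<alpha> k l * g k l e)" for s
  define \<Phi> where "\<Phi> = (\<Sum>(k, l)\<in>{1..M} \<times> {1..M}. \<phi> (k, l, 1))"
  define E\<^sub>\<Sigma> where "E\<^sub>\<Sigma> = (\<Sum>(k, l)\<in>{1..M} \<times> {1..M}. E k l)"
  define K where "K = (lam + \<beta> * \<Phi> + E\<^sub>\<Sigma>) / (1 - \<beta>)"
  have \<phi>_nonneg: "0 \<le> \<phi> (k, l, e)" if "k \<in> {1..M}" "l \<in> {1..M}" for k l e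
    using \<alpha> g_nonneg[OF that] by (simp add: \<phi>_def)
  have \<phi>_young: "\<phi> (k, l, e) \<le> \<Phi>" if "k \<in> {1..M}" "l \<in> {1..M}" "e \<le> 1" for k l e
  proof -
    have "\<phi> (k, l, e) \<le> \<phi> (k, l, 1)"
      using that \<alpha>[of k l] monoD[OF g_mono, of k l e 1] by (simp add: \<phi>_def mult_left_mono)
    also have "\<dots> = (\<lambda>(k, l). \<phi> (k, l, 1)) (k, l)" by simp
    also have "\<dots> \<le> \<Phi>"
      unfolding \<Phi>_def by (rule member_le_sum) (use that \<phi>_nonneg in auto)
    finally show ?thesis .
  qed
  have E_le: "E k l \<le> E\<^sub>\<Sigma>" if "k \<in> {1..M}" "l \<in> {1..M}" for k l
  proof -
    have "(\<lambda>(k, l). E k l) (k, l) \<le> E\<^sub>\<Sigma>"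
      unfolding E\<^sub>\<Sigma>_def by (rule member_le_sum) (use that E in auto)
    then show ?thesis by simp
  qed
  have "0 \<le> \<Phi>" unfolding \<Phi>_def using \<phi>_nonneg by (intro sum_nonneg) auto
  have "0 \<le> E\<^sub>\<Sigma>" unfolding E\<^sub>\<Sigma>_def using E by (intro sum_nonneg) auto
  have "0 \<le> K" unfolding K_def using assms lam_nonneg \<open>0 \<le> \<Phi>\<close> \<open>0 \<le> E\<^sub>\<Sigma>\<close> by simp
  have K_eq: "K = lam + \<beta> * \<Phi> + E\<^sub>\<Sigma> + \<beta> * K"
    using assms by (simp add: K_def field_simps)
  show ?thesis
  proof (rule that[of "\<lambda>s. K + \<phi> s"])
    fix i j d assume i: "i \<in> {1..M}" and j: "j \<in> {1..M}"
    show "0 \<le> K + \<phi> (i, j, d)" using \<open>0 \<le> K\<close> \<phi>_nonneg[OF i j] by simp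
    have "expected_next i j d 1 (\<lambda>s. K + \<phi> s) \<le> K + (\<Phi> + stale_prob i j 1 i * \<phi> (i, j, d + 1))"
      using expected_next_le_young_bound[where f = \<phi>, OF i j \<open>0 \<le> \<Phi>\<close> \<phi>_young]
      by (simp add: expected_next_add_const[OF i])
    then have "\<beta> * expected_next i j d 1 (\<lambda>s. K + \<phi> s)
        \<le> \<beta> * (K + (\<Phi> + stale_prob i j 1 i * \<phi> (i, j, d + 1)))"
      using assms(1) by (rule mult_left_mono)
    then have "stage_cost D g lam (i, j, d) 1 + \<beta> * expected_next i j d 1 (\<lambda>s. K + \<phi> s)
        \<le> stage_cost D g lam (i, j, d) 1 + \<beta> * K + \<beta> * \<Phi> + \<beta> * stale_prob i j 1 i * \<phi> (i, j, d + 1)"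
      by (simp add: algebra_simps)
    also have "\<dots> \<le> K + \<phi> (i, j, d)"
    proof (cases "i = j")
      case True
      then show ?thesis
        using K_eq \<open>0 \<le> E\<^sub>\<Sigma>\<close> by (simp add: stage_cost_def state_cost_def stale_prob_def \<phi>_def)
    next
      case False
      have "D i j * g i j d + \<beta> * stale_prob i j 1 i * \<phi> (i, j, d + 1) \<le> \<alpha> i j * g i j d + E\<^sub>\<Sigma>"
        using drift[OF i j False, of d] E_le[OF i j] False by (simp add: \<phi>_def ac_simps)
      then show ?thesis using K_eq False by (simp add: stage_cost_def state_cost_def \<phi>_def)
    qed
    finally show "stage_cost D g lam (i, j, d) 1 + \<beta> * expected_next i j d 1 (\<lambda>s. K + \<phi> s)
        \<le> K + \<phi> (i, j, d)" .
  qed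
qed

lemma disc_value_mono_age:
  assumes "0 \<le> \<beta>" "\<beta> < 1" and i: "i \<in> {1..M}" and j: "j \<in> {1..M}" and "i \<noteq> j" "d \<le> d'"
  shows "disc_value M Q ps D g lam \<beta> (i, j, d) \<le> disc_value M Q ps D g lam \<beta> (i, j, d')"
proof -
  obtain W where "\<And>n. disc_VI M Q ps D g lam \<beta> n (i, j, d') \<le> W (i, j, d')"
    using supersolution_exists[OF assms(1,2)] disc_VI_le_supersolution[OF assms(1) _ _ i j] by metis
  then have "bdd_above (range (\<lambda>n. disc_VI M Q ps D g lam \<beta> n (i, j, d')))"
    by (intro bdd_aboveI2)
  then show ?thesis
    unfolding disc_value_def
    using disc_VI_mono_age[OF i j \<open>i \<noteq> j\<close> \<open>0 \<le> \<beta>\<close> \<open>d \<le> d'\<close>] by (intro cSUP_mono) auto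
qed

end

theorem theorem4:
  fixes M :: nat and Q :: "nat \<Rightarrow> nat \<Rightarrow> real" and ps :: real
    and D :: "nat \<Rightarrow> nat \<Rightarrow> real" and g :: "nat \<Rightarrow> nat \<Rightarrow> nat \<Rightarrow> real" and lam :: real
    and L :: real and h :: "st \<Rightarrow> real" and beta :: "nat \<Rightarrow> real" and z :: st
  assumes stoch: "stochastic M Q"
    and irred: "irreducible_chain M Q"
    and ap_ne: "Xap M Q \<noteq> {}"
    and ps: "0 \<le> ps" "ps \<le> 1"
    and D_pos: "\<And>i j. i \<in> {1..M} \<Longrightarrow> j \<in> {1..M} \<Longrightarrow> i \<noteq> j \<Longrightarrow> D i j > 0"
    and g_nonneg: "\<And>i j d. i \<in> {1..M} \<Longrightarrow> j \<in> {1..M} \<Longrightarrow> i \<noteq> j \<Longrightarrow> g i j d \<ge> 0"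
    and g_mono: "\<And>i j. i \<in> {1..M} \<Longrightarrow> j \<in> {1..M} \<Longrightarrow> i \<noteq> j \<Longrightarrow> mono (g i j)"
    and lam: "lam \<ge> 0"
    and growth: "\<And>i j. i \<in> Xap M Q \<Longrightarrow> j \<in> {1..M} \<Longrightarrow> j \<noteq> i \<Longrightarrow>
        \<exists>r. ((\<lambda>d. g i j (d + 1) / g i j d) \<longlongrightarrow> r) sequentially \<and> r * (Q i i * (1 - ps)) < 1"
    and beta: "\<And>n. 0 < beta n \<and> beta n < 1" "beta \<longlonglongrightarrow> 1"
    and z: "z \<in> state_space M Q"
    and L_lim: "(\<lambda>n. (1 - beta n) * disc_value M Q ps D g lam (beta n) z) \<longlonglongrightarrow> L"
    and h_lim: "\<And>s. s \<in> state_space M Q \<Longrightarrow>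
        (\<lambda>n. disc_value M Q ps D g lam (beta n) s - disc_value M Q ps D g lam (beta n) z) \<longlonglongrightarrow> h s"
    and bellman: "\<And>s. s \<in> state_space M Q \<Longrightarrow>
        L + h s = min (bellman_rhs M Q ps D g lam h s 0) (bellman_rhs M Q ps D g lam h s 1)"
  shows "\<forall>i j d d'. i \<noteq> j \<and> (i, j, d) \<in> state_space M Q \<and> (i, j, d') \<in> state_space M Q \<and> d \<le> d'
           \<longrightarrow> h (i, j, d) \<le> h (i, j, d')"
proof (intro allI impI)
  interpret remote_estimation M Q ps D g lam
    using stoch ps D_pos g_nonneg g_mono lam growth by unfold_locales (auto intro: less_imp_le)
  fix i j d d'
  assume "i \<noteq> j \<and> (i, j, d) \<in> state_space M Q \<and> (i, j, d') \<in> state_space M Q \<and> d \<le> d'"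
  then have pair: "i \<in> {1..M}" "j \<in> {1..M}" "i \<noteq> j" "d \<le> d'"
    and s: "(i, j, d) \<in> state_space M Q" "(i, j, d') \<in> state_space M Q"
    by (auto simp: state_space_def Xp_def Xap_def)
  have "disc_value M Q ps D g lam (beta n) (i, j, d) \<le> disc_value M Q ps D g lam (beta n) (i, j, d')" for n
    by (intro disc_value_mono_age) (use beta(1)[of n] pair in auto)
  then show "h (i, j, d) \<le> h (i, j, d')"
    by (intro LIMSEQ_le[OF h_lim[OF s(1)] h_lim[OF s(2)]]) (simp add: algebra_simps)
qed

end
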